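(* Let $P=(T;U,V)$ be a 3M-DAP with $2 \le v < u$, and let $\lambda = x_u - x_v$, $\gamma = x_t/t$. Define \[ h(y) = \frac{1}{2}\,\frac{(u-v)y - \lambda}{\gamma(u-v) - \lambda}. \] Then $h$ is an increasing linear function, and applying $h$ entrywise to any feasible solution of $P$ yields a feasible solution of the 3M-DAP $\hat P = (\hat T; \hat U, \hat V)$ with the same matrix dimensions as $P$ and with required row sums $\hat x_t = t/2$ and $\hat x_u = \hat x_v$ (namely $\hat x_u = \hat x_v = \tfrac12 \frac{u x_v - v x_u}{\gamma(u-v)-\lambda}$); in particular $\hat P$ is in standard form and $P$ is equivalent to $\hat P$ with equivalence function $h$.
   Context: A three-matrix division and assignment problem (3M-DAP) $P=(T;U,V)$ is specified by integers $t,u,v$ (numbers of columns), integers $s_t, s_u, s_v$ (numbers of rows) and rationals $x_t, x_u, x_v$ (required row sums), subject to: $t \ge 2$, $u \ge 2$, $v \ge 1$; if $v = 1$ then $v s_v \le (t-2)s_t$; $s_t > 0$, $s_u > 0$, $s_v \ge 0$; $s_u u + s_v v = s_t t$; $s_u x_u + s_v x_v = s_t x_t$; and $x_u/u < x_v/v$. A feasible solution assigns real values to the entries of an $s_t\times t$ matrix $T$, an $s_u \times u$ matrix $U$ and an $s_v \times v$ matrix $V$ so that every row of $T$, $U$, $V$ sums to $x_t$, $x_u$, $x_v$ respectively, and the multiset of entries of $T$ equals the multiset union of the entries of $U$ and $V$. A 3M-DAP is in standard form if $x_u - x_v = 0$ and $x_t/t = 1/2$. Two 3M-DAPs are equivalent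 if their matrices have the same dimensions and there is an increasing linear function mapping the entries of solutions of the first to the entries of solutions of the second. *)

theory Defs
  imports Main "HOL-Library.Multiset" Complex_Main
begin

text \<open>A 3M-DAP P = (T;U,V) is given by column numbers t u v, row numbers st su sv,
  and rational required row sums xt xu xv (represented as reals lying in the rationals).\<close>

definition is_3mdap ::
  "nat \<Rightarrow> nat \<Rightarrow> nat \<Rightarrow> nat \<Rightarrow> nat \<Rightarrow> nat \<Rightarrow> real \<Rightarrow> real \<Rightarrow> real \<Rightarrow> bool" where
  "is_3mdap t u v st su sv xt xu xv \<longleftrightarrow>
     xt \<in> \<rat> \<and> xu \<in> \<rat> \<and> xv \<in> \<rat> \<and>
     t \<ge> 2 \<and> u \<ge> 2 \<and> v \<ge> 1 \<and>
     (v = 1 \<longrightarrow> int v * int sv \<le> (int t - 2) * int st) \<and>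
     st > 0 \<and> su > 0 \<and>
     su * u + sv * v = st * t \<and>
     real su * xu + real sv * xv = real st * xt \<and>
     xu / real u < xv / real v"

definition entries :: "nat \<Rightarrow> nat \<Rightarrow> (nat \<Rightarrow> nat \<Rightarrow> real) \<Rightarrow> real multiset" where
  "entries r c M = image_mset (\<lambda>(i,j). M i j) (mset_set ({..<r} \<times> {..<c}))"

definition rows_sum_to :: "nat \<Rightarrow> nat \<Rightarrow> (nat \<Rightarrow> nat \<Rightarrow> real) \<Rightarrow> real \<Rightarrow> bool" where
  "rows_sum_to r c M x \<longleftrightarrow> (\<forall>i<r. (\<Sum>j<c. M i j) = x)"

text \<open>Feasible solution (T, U, V) of the 3M-DAP; only entries within the dimensions matter.\<close>
definition feasible ::
  "nat \<Rightarrow> nat \<Rightarrow> nat \<Rightarrow> nat \<Rightarrow> nat \<Rightarrow> nat \<Rightarrow> real \<Rightarrow> real \<Rightarrow> real \<Rightarrow>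
   (nat \<Rightarrow> nat \<Rightarrow> real) \<Rightarrow> (nat \<Rightarrow> nat \<Rightarrow> real) \<Rightarrow> (nat \<Rightarrow> nat \<Rightarrow> real) \<Rightarrow> bool" where
  "feasible t u v st su sv xt xu xv T U V \<longleftrightarrow>
     rows_sum_to st t T xt \<and> rows_sum_to su u U xu \<and> rows_sum_to sv v V xv \<and>
     entries st t T = entries su u U + entries sv v V"

definition standard_form :: "nat \<Rightarrow> real \<Rightarrow> real \<Rightarrow> real \<Rightarrow> bool" where
  "standard_form t xt xu xv \<longleftrightarrow> xu - xv = 0 \<and> xt / real t = 1/2"

definition equivalent_via ::
  "(real \<Rightarrow> real) \<Rightarrow> nat \<Rightarrow> nat \<Rightarrow> nat \<Rightarrow> nat \<Rightarrow> nat \<Rightarrow> nat \<Rightarrow>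
   real \<Rightarrow> real \<Rightarrow> real \<Rightarrow> real \<Rightarrow> real \<Rightarrow> real \<Rightarrow> bool" where
  "equivalent_via h t u v st su sv xt xu xv xt' xu' xv' \<longleftrightarrow>
     (\<exists>a b. a > 0 \<and> (\<forall>y. h y = a * y + b)) \<and>
     (\<forall>T U V. feasible t u v st su sv xt xu xv T U V \<longrightarrow>
        feasible t u v st su sv xt' xu' xv'
          (\<lambda>i j. h (T i j)) (\<lambda>i j. h (U i j)) (\<lambda>i j. h (V i j)))"

end

theory Submission
  imports Defs
begin

text \<open>An increasing affine map y \<mapsto> a y + b, applied entrywise, preserves the multiset
  identity between the entries of T and those of U and V, turns a row sum x over c columns into
  a x + c b, and preserves x_u/u < x_v/v. The map h is the one with a x_u + u b = a x_v + v b,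
  i.e. a \<lambda> = -(u - v) b, normalised by a x_t + t b = t/2. It is increasing because u > v
  and its denominator \<gamma>(u - v) - \<lambda> is positive: multiplied by s_t t, the two
  conservation laws of a 3M-DAP turn it into (s_u + s_v)(u x_v - v x_u).\<close>

lemma entries_comp:
  "entries r c (\<lambda>i j. f (M i j)) = image_mset f (entries r c M)"
  unfolding entries_def by (simp add: multiset.map_comp comp_def case_prod_beta')

lemma rows_sum_to_affine:
  assumes "rows_sum_to r c M x"
  shows "rows_sum_to r c (\<lambda>i j. a * M i j + b) (a * x + real c * b)"
  using assms unfolding rows_sum_to_def
  by (simp add: sum.distrib sum_distrib_left[symmetric])

lemma feasible_affine:
  assumes "feasible t u v st su sv xt xu xv T U V"
  shows "feasible t u v st su sv (a * xt + real t * b) (a * xu + real u * b) (a * xv + real v * b)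
           (\<lambda>i j. a * T i j + b) (\<lambda>i j. a * U i j + b) (\<lambda>i j. a * V i j + b)"
  using assms unfolding feasible_def
  by (simp add: rows_sum_to_affine entries_comp[where f = "\<lambda>y. a * y + b"])

lemma equivalent_via_affine:
  assumes "a > 0"
  shows "equivalent_via (\<lambda>y. a * y + b) t u v st su sv xt xu xv
           (a * xt + real t * b) (a * xu + real u * b) (a * xv + real v * b)"
  unfolding equivalent_via_def using assms feasible_affine by blast

lemma is_3mdap_affine:
  assumes P: "is_3mdap t u v st su sv xt xu xv"
    and "a > 0" "a \<in> \<rat>" "b \<in> \<rat>"
  shows "is_3mdap t u v st su sv (a * xt + real t * b) (a * xu + real u * b) (a * xv + real v * b)"
proof -
  have u: "real u > 0" and v: "real v > 0" using P unfolding is_3mdap_def by auto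
  have dims: "real su * real u + real sv * real v = real st * real t"
    using P unfolding is_3mdap_def by (metis of_nat_add of_nat_mult)
  have "real su * (a * xu + real u * b) + real sv * (a * xv + real v * b)
      = a * (real su * xu + real sv * xv) + (real su * real u + real sv * real v) * b"
    by (simp add: algebra_simps)
  also have "\<dots> = real st * (a * xt + real t * b)"
    using P dims unfolding is_3mdap_def by (simp add: algebra_simps)
  finally have sums: "real su * (a * xu + real u * b) + real sv * (a * xv + real v * b)
      = real st * (a * xt + real t * b)" .
  have "(a * xu + real u * b) / real u = a * (xu / real u) + b"
    using u by (simp add: field_simps)
  also have "\<dots> < a * (xv / real v) + b"
    using P \<open>a > 0\<close> unfolding is_3mdap_def by (simp only: add_less_cancel_right mult_less_cancel_left_pos)
  also have "\<dots> = (a * xv + real v * b) / real v"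
    using v by (simp add: field_simps)
  finally have "(a * xu + real u * b) / real u < (a * xv + real v * b) / real v" .
  with P sums assms(3,4) show ?thesis
    unfolding is_3mdap_def by (auto intro: Rats_add Rats_mult)
qed

lemma is_3mdap_denominator_pos:
  assumes P: "is_3mdap t u v st su sv xt xu xv"
  shows "xt / real t * (real u - real v) - (xu - xv) > 0"
proof -
  define D where "D = xt / real t * (real u - real v) - (xu - xv)"
  have t: "real t > 0" and u: "real u > 0" and v: "real v > 0" and st: "real st > 0"
    and s: "real su + real sv > 0"
    using P unfolding is_3mdap_def by auto
  have dims: "real su * real u + real sv * real v = real st * real t"
    using P unfolding is_3mdap_def by (metis of_nat_add of_nat_mult)
  have sums: "real su * xu + real sv * xv = real st * xt"
    using P unfolding is_3mdap_def by simp
  have "xu * real v < xv * real u"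
    using P u v unfolding is_3mdap_def by (simp add: field_simps)
  then have cross: "real u * xv - real v * xu > 0" by (simp add: algebra_simps)
  have "real st * real t * D = (real u - real v) * (real st * xt) - (real st * real t) * (xu - xv)"
    unfolding D_def using t by (simp add: field_simps)
  also have "\<dots> = (real u - real v) * (real su * xu + real sv * xv)
                 - (real su * real u + real sv * real v) * (xu - xv)"
    using dims sums by simp
  also have "\<dots> = (real su + real sv) * (real u * xv - real v * xu)"
    by (simp add: algebra_simps)
  finally have "real st * real t * D > 0" using s cross by simp
  then show ?thesis
    unfolding D_def[symmetric] by (rule zero_less_mult_pos) (use st t in simp)
qed

theorem theorem2:
  fixes t u v st su sv :: nat and xt xu xv :: real and h :: "real \<Rightarrow> real"
  assumes P: "is_3mdap t u v st su sv xt xu xv"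
    and v2: "2 \<le> v" and vu: "v < u"
    and h_def: "h = (\<lambda>y. (1/2) * (((real u - real v) * y - (xu - xv)) /
                               ((xt / real t) * (real u - real v) - (xu - xv))))"
  shows "(\<exists>a b. a > 0 \<and> (\<forall>y. h y = a * y + b))
    \<and> is_3mdap t u v st su sv (real t / 2)
        ((1/2) * (real u * xv - real v * xu) / ((xt / real t) * (real u - real v) - (xu - xv)))
        ((1/2) * (real u * xv - real v * xu) / ((xt / real t) * (real u - real v) - (xu - xv)))
    \<and> standard_form t (real t / 2)
        ((1/2) * (real u * xv - real v * xu) / ((xt / real t) * (real u - real v) - (xu - xv)))
        ((1/2) * (real u * xv - real v * xu) / ((xt / real t) * (real u - real v) - (xu - xv)))
    \<and> equivalent_via h t u v st su sv xt xu xv (real t / 2)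
        ((1/2) * (real u * xv - real v * xu) / ((xt / real t) * (real u - real v) - (xu - xv)))
        ((1/2) * (real u * xv - real v * xu) / ((xt / real t) * (real u - real v) - (xu - xv)))"
proof -
  define D where "D = xt / real t * (real u - real v) - (xu - xv)"
  define X where "X = (1/2) * (real u * xv - real v * xu) / D"
  define a where "a = (real u - real v) / (2 * D)"
  define b where "b = - (xu - xv) / (2 * D)"
  have D: "D > 0" unfolding D_def using is_3mdap_denominator_pos[OF P] .
  have t: "real t > 0" using P unfolding is_3mdap_def by auto
  have h_affine: "h = (\<lambda>y. a * y + b)"
    unfolding h_def D_def[symmetric] a_def b_def using D by (simp add: fun_eq_iff field_simps)
  have a: "a > 0" unfolding a_def using vu D by simp
  have rats: "a \<in> \<rat>" "b \<in> \<rat>"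
    using P unfolding a_def b_def D_def is_3mdap_def
    by (auto intro!: Rats_divide Rats_mult Rats_diff)
  have "a * xt + real t * b = ((real u - real v) * xt - real t * (xu - xv)) / (2 * D)"
    unfolding a_def b_def using D by (simp add: field_simps)
  also have "(real u - real v) * xt - real t * (xu - xv) = real t * D"
    unfolding D_def using t by (simp add: field_simps)
  finally have T: "a * xt + real t * b = real t / 2"
    using D by simp
  have U: "a * xu + real u * b = X" and V: "a * xv + real v * b = X"
    unfolding a_def b_def X_def using D by (simp_all add: field_simps)
  have "is_3mdap t u v st su sv (real t / 2) X X"
    using is_3mdap_affine[OF P a rats] unfolding T U V .
  moreover have "standard_form t (real t / 2) X X"
    unfolding standard_form_def using t by simp
  moreover have "equivalent_via h t u v st su sv xt xu xv (real t / 2) X X"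
    using equivalent_via_affine[OF a, of b t u v st su sv xt xu xv] unfolding h_affine T U V .
  ultimately show ?thesis
    using a h_affine unfolding X_def D_def by blast
qed

end
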